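(* Let $\alpha\in\mathbb{R}\setminus\{0\}$, let $\delta^{\star}(\alpha)=1/\alpha^2$ if $\alpha\le 2$ and $\delta^{\star}(\alpha)=\frac{1}{2\alpha}\exp\{1-\frac{\alpha}{2}\}$ if $\alpha>2$, let $|\delta|\le\delta^{\star}(\alpha)$, and let $C(u,v)=uv+\delta(1-e^{\alpha(u-u^2)})(1-e^{\alpha(v-v^2)})$ on $[0,1]^2$. If $\delta\ge 0$ then $C$ is positively quadrant dependent, i.e. $C(u,v)\ge uv$ for all $(u,v)\in[0,1]^2$; if $\delta\le0$ then $C$ is negatively quadrant dependent, i.e. $C(u,v)\le uv$ for all $(u,v)\in[0,1]^2$. *)

theory Defs
  imports Complex_Main
begin

definition delta_star :: "real \<Rightarrow> real" where
  "delta_star \<alpha> = (if \<alpha> \<le> 2 then 1 / \<alpha>^2 else (1 / (2 * \<alpha>)) * exp (1 - \<alpha> / 2))"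

definition copC :: "real \<Rightarrow> real \<Rightarrow> real \<Rightarrow> real \<Rightarrow> real" where
  "copC \<alpha> \<delta> u v = u * v + \<delta> * (1 - exp (\<alpha> * (u - u^2))) * (1 - exp (\<alpha> * (v - v^2)))"

end

theory Submission
  imports Defs
begin

text \<open>Since \<open>u - u\<^sup>2 \<ge> 0\<close> on \<open>[0,1]\<close>, both factors \<open>1 - exp (\<alpha> (u - u\<^sup>2))\<close> and
  \<open>1 - exp (\<alpha> (v - v\<^sup>2))\<close> have the sign of \<open>-\<alpha>\<close>, so their product is nonnegative and
  \<open>C(u,v) - uv\<close> has the sign of \<open>\<delta>\<close>.\<close>

lemma diff_power2_nonneg_unit_interval:
  fixes x :: real
  assumes "x \<in> {0..1}"
  shows "0 \<le> x - x\<^sup>2"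
  using assms by (auto simp: power2_eq_square mult_left_le)

lemma one_minus_exp_mult_nonneg:
  fixes a s t :: real
  assumes "0 \<le> s" "0 \<le> t"
  shows "0 \<le> (1 - exp (a * s)) * (1 - exp (a * t))"
proof (cases "0 \<le> a")
  case True
  then have "1 - exp (a * s) \<le> 0" "1 - exp (a * t) \<le> 0"
    using assms by simp_all
  then show ?thesis by (rule mult_nonpos_nonpos)
next
  case False
  then have "a * s \<le> 0" "a * t \<le> 0"
    using assms by (simp_all add: mult_nonpos_nonneg)
  then show ?thesis by simp
qed

lemma copC_minus_mult:
  "copC \<alpha> \<delta> u v - u * v = \<delta> * ((1 - exp (\<alpha> * (u - u\<^sup>2))) * (1 - exp (\<alpha> * (v - v\<^sup>2))))"
  by (simp add: copC_def mult.assoc)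

theorem proposition2:
  fixes \<alpha> \<delta> :: real
  assumes "\<alpha> \<noteq> 0"
    and "\<bar>\<delta>\<bar> \<le> delta_star \<alpha>"
  shows "(\<delta> \<ge> 0 \<longrightarrow> (\<forall>u\<in>{0..1}. \<forall>v\<in>{0..1}. copC \<alpha> \<delta> u v \<ge> u * v))
       \<and> (\<delta> \<le> 0 \<longrightarrow> (\<forall>u\<in>{0..1}. \<forall>v\<in>{0..1}. copC \<alpha> \<delta> u v \<le> u * v))"
proof -
  have product_nonneg:
    "0 \<le> (1 - exp (\<alpha> * (u - u\<^sup>2))) * (1 - exp (\<alpha> * (v - v\<^sup>2)))"
    if "u \<in> {0..1}" "v \<in> {0..1}" for u v
    using that by (intro one_minus_exp_mult_nonneg diff_power2_nonneg_unit_interval)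
  show ?thesis
  proof (intro conjI impI ballI)
    fix u v :: real
    assume "\<delta> \<ge> 0" "u \<in> {0..1}" "v \<in> {0..1}"
    with product_nonneg have "0 \<le> copC \<alpha> \<delta> u v - u * v"
      unfolding copC_minus_mult by simp
    then show "copC \<alpha> \<delta> u v \<ge> u * v" by simp
  next
    fix u v :: real
    assume "\<delta> \<le> 0" "u \<in> {0..1}" "v \<in> {0..1}"
    with product_nonneg have "copC \<alpha> \<delta> u v - u * v \<le> 0"
      unfolding copC_minus_mult by (simp add: mult_nonpos_nonneg)
    then show "copC \<alpha> \<delta> u v \<le> u * v" by simp
  qed
qed

end
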